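(* Let $X_1,\dots,X_d$ be disjoint finite nonempty sets, $X$ their product, $S\subseteq[d]$ with $|S|\ge 2$, and $Z\subseteq X$ such that $\pi_{[d]-S}(Z)$ is a single point. Let $\delta>0$ with $|Z|\ge \delta\cdot|\pi_S(X)|$, and suppose $|X_i|\ge n$ for every $i\in S$. Then for every $\epsilon>0$, \[\frac{|\mathscr{G}_S(\epsilon, Z)|}{|\mathscr{G}_S(Z)|} \le \exp\left( |\pi_S(X)| \cdot \left(-\delta \epsilon^2 + 2^{|S|+2}\cdot n^{-1/2^{|S|}}\right)\right).\]
   Context: $[d]=\{1,\dots,d\}$; $\pi_T$ denotes projection of $X$ (or of $\overline{X}_S$) onto the factors indexed by $T$, so $\pi_S(X)=\prod_{i\in S}X_i$. $\overline{X}_S=\prod_{i=1}^d W_i$ with $W_i=X_i\times X_i$ for $i\in S$ and $W_i=X_i$ otherwise. For $\bar x\in\overline{X}_S$, $\widehat{x}(\emptyset)$ is the set of points $y\in X$ with $\pi_i(y)$ one of the two entries of the pair $\pi_i(\bar x)$ for $i\in S$ and $\pi_i(y)=\pi_i(\bar x)$ for $i\notin S$. For $F:Z\to\mathbb{F}_2$ define $dF$ on $\{\bar x\in\overline{X}_S:\widehat{x}(\emptyset)\subseteq Z\}$ by $dF(\bar x)=\sum_{x\in\widehat{x}(\emptyset)}F(x)$ if $|\widehat{x}(\emptyset)|=2^{|S|}$ and $dF(\bar x)=0$ otherwise. $\mathscr{G}_S(Z)$ is the set of all functions $dF$ as $F$ ranges over functions $Z\to\mathbb{F}_2$, and $\mathscr{G}_S(\epsilon,Z)$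 is the set of $g\in\mathscr{G}_S(Z)$ expressible as $g=dF$ for some $F$ equal to $1$ on more than $(0.5+\epsilon)|Z|$ or fewer than $(0.5-\epsilon)|Z|$ points of $Z$. *)

theory Defs
  imports "HOL-Analysis.Analysis" "HOL-Library.FuncSet"
begin

text \<open>A point of Xbar_S is encoded as a pair (u,v) of points of X agreeing off S:
  the i-th coordinate is the pair (u i, v i) for i in S and the common value
  u i = v i otherwise. This is a bijective encoding of Xbar_S.
  F_2 is encoded by bool (True = 1); sums in F_2 become parity of a count.\<close>

definition Xprod :: "nat \<Rightarrow> (nat \<Rightarrow> 'a set) \<Rightarrow> (nat \<Rightarrow> 'a) set" where
  "Xprod d Xs = PiE {1..d} Xs"

definition proj :: "nat set \<Rightarrow> (nat \<Rightarrow> 'a) \<Rightarrow> (nat \<Rightarrow> 'a)" where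
  "proj T x = restrict x T"

definition Xbar :: "nat \<Rightarrow> (nat \<Rightarrow> 'a set) \<Rightarrow> nat set \<Rightarrow> ((nat \<Rightarrow> 'a) \<times> (nat \<Rightarrow> 'a)) set" where
  "Xbar d Xs S = {(u, v). u \<in> Xprod d Xs \<and> v \<in> Xprod d Xs \<and> (\<forall>i\<in>{1..d} - S. u i = v i)}"

definition hatx :: "nat \<Rightarrow> (nat \<Rightarrow> 'a set) \<Rightarrow> nat set \<Rightarrow> (nat \<Rightarrow> 'a) \<times> (nat \<Rightarrow> 'a) \<Rightarrow> (nat \<Rightarrow> 'a) set" where
  "hatx d Xs S xb = {y \<in> Xprod d Xs. (\<forall>i\<in>S. y i = fst xb i \<or> y i = snd xb i)
                                      \<and> (\<forall>i\<in>{1..d} - S. y i = fst xb i)}"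

text \<open>dF, defined on {xb in Xbar_S. hatx xb \<subseteq> Z}; extended by 0 (False) outside
  this (fixed) domain, so that distinct functions correspond to distinct dF.\<close>
definition dF :: "nat \<Rightarrow> (nat \<Rightarrow> 'a set) \<Rightarrow> nat set \<Rightarrow> (nat \<Rightarrow> 'a) set \<Rightarrow> ((nat \<Rightarrow> 'a) \<Rightarrow> bool)
                 \<Rightarrow> (nat \<Rightarrow> 'a) \<times> (nat \<Rightarrow> 'a) \<Rightarrow> bool" where
  "dF d Xs S Z F = (\<lambda>xb. if xb \<in> Xbar d Xs S \<and> hatx d Xs S xb \<subseteq> Z
                             \<and> card (hatx d Xs S xb) = 2 ^ card S
                          then odd (card {x \<in> hatx d Xs S xb. F x}) else False)"

definition GS :: "nat \<Rightarrow> (nat \<Rightarrow> 'a set) \<Rightarrow> nat set \<Rightarrow> (nat \<Rightarrow> 'a) set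
                  \<Rightarrow> ((nat \<Rightarrow> 'a) \<times> (nat \<Rightarrow> 'a) \<Rightarrow> bool) set" where
  "GS d Xs S Z = (\<lambda>F. dF d Xs S Z F) ` (Z \<rightarrow>\<^sub>E (UNIV :: bool set))"

definition GS_eps :: "nat \<Rightarrow> (nat \<Rightarrow> 'a set) \<Rightarrow> nat set \<Rightarrow> real \<Rightarrow> (nat \<Rightarrow> 'a) set
                  \<Rightarrow> ((nat \<Rightarrow> 'a) \<times> (nat \<Rightarrow> 'a) \<Rightarrow> bool) set" where
  "GS_eps d Xs S \<epsilon> Z = {g. \<exists>F \<in> Z \<rightarrow>\<^sub>E (UNIV :: bool set). g = dF d Xs S Z F \<and>
      (real (card {z \<in> Z. F z}) > (1/2 + \<epsilon>) * real (card Z) \<or>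
       real (card {z \<in> Z. F z}) < (1/2 - \<epsilon>) * real (card Z))}"

end

theory Submission
  imports Defs "HOL-Probability.Hoeffding"
begin

text \<open>Fix an ordering of Z and let D be the set of points of Z that are not the largest
  point of any full box, i.e. of any set hatx xb of 2^|S| points lying in Z. A function F on Z
  is recovered from dF F and its values on D, so |GS(Z)| \<ge> 2^(|Z| - |D|). Since D contains
  no full box and Z lies in a single fibre over the coordinates outside S, the projection of D
  to \<pi>_S(X) is a box-free set of the same size, and a Kovari-Sos-Turan type induction on |S|
  bounds it by 4 |\<pi>_S(X)| n^(-1/2^|S|). On the other hand every element of GS(\<epsilon>, Z) is
  dF F for an F that is \<epsilon>-unbalanced on Z, and by Hoeffding's inequality there are at most
  2 \<cdot> 2^|Z| exp(-2 \<epsilon>^2 |Z|) such F. Dividing the two counts and using |Z| \<ge> \<delta> |\<pi>_S(X)|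
  gives the bound.\<close>

section \<open>Box-free sets\<close>

definition box_free :: "'i set \<Rightarrow> ('i \<Rightarrow> 'a) set \<Rightarrow> bool" where
  "box_free S D \<longleftrightarrow> (\<nexists>u v. (\<forall>i\<in>S. u i \<noteq> v i) \<and> PiE S (\<lambda>i. {u i, v i}) \<subseteq> D)"

lemma card_le_1_if_box_free_singleton:
  assumes "box_free {a} D" "D \<subseteq> PiE {a} Xs"
  shows "card D \<le> 1"
proof -
  have determined: "y = w" if "y \<in> PiE {a} B" "w \<in> PiE {a} C" "y a = w a" for y w B C
  proof
    fix i show "y i = w i" using that by (cases "i = a") (auto simp: PiE_iff extensional_def)
  qed
  have "u = v" if uv: "u \<in> D" "v \<in> D" for u v
  proof (rule ccontr)
    assume "u \<noteq> v"
    hence "u a \<noteq> v a" using uv assms(2) determined[of u Xs v Xs] by auto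
    moreover have "PiE {a} (\<lambda>i. {u i, v i}) \<subseteq> D"
    proof
      fix y assume y: "y \<in> PiE {a} (\<lambda>i. {u i, v i})"
      have "y a = u a \<or> y a = v a" using y by auto
      hence "y = u \<or> y = v" using uv assms(2) determined[OF y, of u Xs] determined[OF y, of v Xs] by auto
      thus "y \<in> D" using uv by auto
    qed
    ultimately show False using assms(1) unfolding box_free_def by blast
  qed
  thus ?thesis by (metis card.infinite card_le_Suc0_iff_eq le0 One_nat_def)
qed

lemma card_slices_PiE_insert:
  assumes "a \<notin> S" "finite (Xs a)" "finite (PiE S Xs)" "D \<subseteq> PiE (insert a S) Xs"
  shows "card D = (\<Sum>x\<in>Xs a. card {y \<in> PiE S Xs. y(a := x) \<in> D})"
proof -
  define slice where "slice x = {y \<in> PiE S Xs. y(a := x) \<in> D}" for x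
  have "bij_betw (\<lambda>f. (f a, f(a := undefined))) D (Sigma (Xs a) slice)"
  proof (rule bij_betwI[where g = "\<lambda>(x, y). y(a := x)"])
    show "(\<lambda>f. (f a, f(a := undefined))) \<in> D \<rightarrow> Sigma (Xs a) slice"
      using assms(1,4) by (auto simp: slice_def PiE_iff extensional_def)
    show "(\<lambda>(x, y). y(a := x)) \<in> Sigma (Xs a) slice \<rightarrow> D"
      by (auto simp: slice_def)
    show "(\<lambda>f. (f a, f(a := undefined))) ((\<lambda>(x, y). y(a := x)) p) = p"
      if "p \<in> Sigma (Xs a) slice" for p
      using that assms(1) by (auto simp: slice_def PiE_iff extensional_def fun_eq_iff)
  qed simp
  hence "card D = card (Sigma (Xs a) slice)" by (rule bij_betw_same_card)
  also have "\<dots> = (\<Sum>x\<in>Xs a. card (slice x))"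
    using assms(2,3) by (intro card_SigmaI) (auto simp: slice_def)
  finally show ?thesis unfolding slice_def .
qed

lemma square_sum_card_le_card_mult_sum_card_Int:
  assumes "finite A" "finite Y" "\<forall>x\<in>A. P x \<subseteq> Y"
  shows "(\<Sum>x\<in>A. real (card (P x)))\<^sup>2
         \<le> real (card Y) * (\<Sum>x\<in>A. \<Sum>x'\<in>A. real (card (P x \<inter> P x')))"
proof -
  define deg where "deg y = (\<Sum>x\<in>A. indicator (P x) y :: real)" for y
  have card_eq: "real (card B) = (\<Sum>y\<in>Y. indicator B y)" if "B \<subseteq> Y" for B
    using that assms(2) by (simp add: indicator_def sum.If_cases Int_absorb1)
  have "(\<Sum>x\<in>A. real (card (P x))) = (\<Sum>y\<in>Y. deg y)"
    using assms(3) by (simp add: card_eq deg_def sum.swap[of _ A Y])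
  moreover have "(\<Sum>x\<in>A. \<Sum>x'\<in>A. real (card (P x \<inter> P x'))) = (\<Sum>y\<in>Y. (deg y)\<^sup>2)"
  proof -
    have "(\<Sum>x\<in>A. \<Sum>x'\<in>A. real (card (P x \<inter> P x')))
          = (\<Sum>x\<in>A. \<Sum>x'\<in>A. \<Sum>y\<in>Y. indicator (P x) y * indicator (P x') y)"
      using assms(3) by (intro sum.cong refl, subst card_eq) (auto simp: indicator_inter_arith)
    also have "\<dots> = (\<Sum>y\<in>Y. (deg y)\<^sup>2)"
      by (simp add: deg_def power2_eq_square sum_product sum.swap[of _ _ Y])
    finally show ?thesis .
  qed
  ultimately show ?thesis
    using sum_squared_le_sum_of_squares[of deg Y] by (simp add: mult.commute)
qed

lemma square_sum_card_le_of_card_Int_le: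
  assumes "finite A" "finite Y" "\<forall>x\<in>A. P x \<subseteq> Y" "B \<ge> 0"
    and "\<And>x x'. x \<in> A \<Longrightarrow> x' \<in> A \<Longrightarrow> x \<noteq> x' \<Longrightarrow> real (card (P x \<inter> P x')) \<le> B"
  shows "(\<Sum>x\<in>A. real (card (P x)))\<^sup>2
         \<le> real (card Y) * ((\<Sum>x\<in>A. real (card (P x))) + real (card A) ^ 2 * B)"
proof -
  have row: "(\<Sum>x'\<in>A. real (card (P x \<inter> P x'))) \<le> real (card (P x)) + real (card A) * B"
    if x: "x \<in> A" for x
  proof -
    have "(\<Sum>x'\<in>A. real (card (P x \<inter> P x')))
          = real (card (P x)) + (\<Sum>x'\<in>A - {x}. real (card (P x \<inter> P x')))"
      using sum.remove[OF assms(1) x, of "\<lambda>x'. real (card (P x \<inter> P x'))"] by simp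
    also have "(\<Sum>x'\<in>A - {x}. real (card (P x \<inter> P x'))) \<le> (\<Sum>x'\<in>A - {x}. B)"
      by (rule sum_mono) (use assms(5) x in auto)
    also have "\<dots> = real (card (A - {x})) * B" by simp
    also have "\<dots> \<le> real (card A) * B"
      using assms(1,4) by (intro mult_right_mono) (simp_all add: card_mono)
    finally show ?thesis by simp
  qed
  have "(\<Sum>x\<in>A. \<Sum>x'\<in>A. real (card (P x \<inter> P x')))
        \<le> (\<Sum>x\<in>A. real (card (P x))) + real (card A) ^ 2 * B"
    using sum_mono[of A _ "\<lambda>x. real (card (P x)) + real (card A) * B", OF row]
    by (simp add: sum.distrib power2_eq_square)
  with square_sum_card_le_card_mult_sum_card_Int[OF assms(1-3)] show ?thesis
    by (meson mult_left_mono of_nat_0_le_iff order_trans)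
qed

lemma box_free_subset: "box_free S D \<Longrightarrow> D' \<subseteq> D \<Longrightarrow> box_free S D'"
  unfolding box_free_def by blast

lemma box_free_Int_slices:
  assumes "a \<notin> S" "box_free (insert a S) D" "x \<noteq> x'"
  shows "box_free S ({y. y(a := x) \<in> D} \<inter> {y. y(a := x') \<in> D})"
  unfolding box_free_def
proof (intro notI, elim exE conjE)
  fix u v assume uv: "\<forall>i\<in>S. u i \<noteq> v i"
    and box: "PiE S (\<lambda>i. {u i, v i}) \<subseteq> {y. y(a := x) \<in> D} \<inter> {y. y(a := x') \<in> D}"
  have "PiE (insert a S) (\<lambda>i. {(u(a := x)) i, (v(a := x')) i}) \<subseteq> D"
  proof
    fix f assume f: "f \<in> PiE (insert a S) (\<lambda>i. {(u(a := x)) i, (v(a := x')) i})"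
    have "f(a := undefined) \<in> PiE S (\<lambda>i. {u i, v i})"
      using f assms(1) by (auto simp: PiE_iff extensional_def)
    hence "f(a := undefined) \<in> {y. y(a := x) \<in> D} \<inter> {y. y(a := x') \<in> D}"
      using box by blast
    moreover have "f a = x \<or> f a = x'" using PiE_mem[OF f, of a] by simp
    ultimately show "f \<in> D" by (auto simp: fun_upd_idem)
  qed
  moreover have "\<forall>i\<in>insert a S. (u(a := x)) i \<noteq> (v(a := x')) i" using uv assms(1,3) by auto
  ultimately show False using assms(2) unfolding box_free_def by blast
qed

lemma one_le_mult_powr_neg:
  fixes A n c :: real
  assumes "n \<le> A" "1 \<le> n" "1 \<le> c"
  shows "1 \<le> A * n powr (- 1 / c)"
proof -
  have "1 = A * (1 / A)" using assms by simp
  also have "\<dots> \<le> A * (1 / n)"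
    using assms by (intro mult_left_mono divide_left_mono) auto
  also have "\<dots> = A * n powr (- 1)"
    using assms by (simp add: powr_minus_divide)
  also have "\<dots> \<le> A * n powr (- 1 / c)"
    using assms by (intro mult_left_mono powr_mono) (auto simp: field_simps)
  finally show ?thesis .
qed

lemma le_of_square_le_linear_plus_square:
  fixes D Y A t :: real
  assumes "D\<^sup>2 \<le> Y * (D + A\<^sup>2 * (4 * Y * t\<^sup>2))" "1 \<le> A * t"
    and "0 \<le> D" "0 \<le> Y" "0 \<le> A" "0 \<le> t"
  shows "D \<le> 4 * A * Y * t"
proof (rule ccontr)
  define M where "M = 4 * A * Y * t"
  assume "\<not> ?thesis"
  hence M: "M < D" by (simp add: M_def)
  have "Y \<le> M / 4" using mult_left_mono[OF assms(2) assms(4)] by (simp add: M_def algebra_simps)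
  hence "Y * D \<le> M / 4 * D" using assms(3) by (rule mult_right_mono)
  moreover have "Y * (A\<^sup>2 * (4 * Y * t\<^sup>2)) = M\<^sup>2 / 4" by (simp add: M_def power2_eq_square)
  moreover have "M / 4 * D + M\<^sup>2 / 4 < D\<^sup>2"
  proof -
    have "0 \<le> M" using assms(4-6) by (simp add: M_def)
    hence "M * M \<le> M * D" "0 \<le> M * D" "M * D < D * D"
      using M by (auto intro: mult_left_mono mult_strict_right_mono)
    thus ?thesis by (simp add: power2_eq_square)
  qed
  ultimately show False using assms(1) by (simp add: distrib_left)
qed

text \<open>Induction on |S|: two distinct slices of D along a coordinate a meet in a box-free set
  of one dimension less, and Cauchy-Schwarz over the slices turns this into a quadratic
  inequality for |D|.\<close>
theorem card_le_if_box_free: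
  assumes "finite S" "S \<noteq> {}" "\<forall>i\<in>S. finite (Xs i) \<and> n \<le> card (Xs i)" "1 \<le> n"
    and "D \<subseteq> PiE S Xs" "box_free S D"
  shows "real (card D) \<le> 4 * real (card (PiE S Xs)) * real n powr (- 1 / 2 ^ card S)"
  using assms(1-3,5,6)
proof (induction S arbitrary: D rule: finite_ne_induct)
  case (singleton a)
  have "real (card D) \<le> 1" using card_le_1_if_box_free_singleton singleton.prems by simp
  also have "\<dots> \<le> real (card (Xs a)) * real n powr (- 1 / 2)"
    using one_le_mult_powr_neg[of n "card (Xs a)" 2] singleton.prems(1) assms(4) by simp
  finally show ?case by (simp add: card_PiE)
next
  case (insert a S)
  define slice where "slice x = {y \<in> PiE S Xs. y(a := x) \<in> D}" for x
  define t where "t = real n powr (- 1 / 2 ^ card (insert a S))"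
  have fin: "finite (Xs a)" "finite (PiE S Xs)"
    using insert.prems(1) insert.hyps(1) by (auto intro!: finite_PiE)
  have "t\<^sup>2 = real n powr (- 1 / 2 ^ card S)"
    using insert.hyps by (simp add: t_def power2_eq_square powr_add[symmetric])
  hence "real (card (slice x \<inter> slice x')) \<le> 4 * real (card (PiE S Xs)) * t\<^sup>2"
    if "x \<noteq> x'" for x x'
  proof -
    have "box_free S (slice x \<inter> slice x')"
      using box_free_Int_slices[OF insert.hyps(3) insert.prems(3) that]
      by (rule box_free_subset) (auto simp: slice_def)
    with insert.IH[of "slice x \<inter> slice x'"] insert.prems(1) show ?thesis
      unfolding \<open>t\<^sup>2 = _\<close> by (auto simp: slice_def)
  qed
  hence "(\<Sum>x\<in>Xs a. real (card (slice x)))\<^sup>2 \<le> real (card (PiE S Xs)) *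
      ((\<Sum>x\<in>Xs a. real (card (slice x))) + real (card (Xs a)) ^ 2 * (4 * real (card (PiE S Xs)) * t\<^sup>2))"
    by (intro square_sum_card_le_of_card_Int_le fin) (auto simp: slice_def)
  moreover have "real (card D) = (\<Sum>x\<in>Xs a. real (card (slice x)))"
    using card_slices_PiE_insert[OF insert.hyps(3) fin insert.prems(2)] by (simp add: slice_def)
  moreover have "1 \<le> real (card (Xs a)) * t"
    unfolding t_def using insert.prems(1) assms(4)
    by (intro one_le_mult_powr_neg) auto
  ultimately have "real (card D) \<le> 4 * real (card (Xs a)) * real (card (PiE S Xs)) * t"
    by (intro le_of_square_le_linear_plus_square) (auto simp: t_def)
  thus ?case using insert.hyps by (simp add: card_PiE t_def)
qed

section \<open>Unbalanced Boolean functions\<close>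

lemma sum_binomial_far_from_mean_le:
  fixes m :: nat and e :: real
  assumes "m > 0" "e \<ge> 0"
  shows "real (\<Sum>j\<in>{j\<in>{..m}. e \<le> \<bar>real j - real m / 2\<bar>}. m choose j)
         \<le> 2 ^ m * (2 * exp (- 2 * e\<^sup>2 / real m))"
proof -
  let ?J = "{j\<in>{..m}. e \<le> \<bar>real j - real m / 2\<bar>}"
  let ?B = "binomial_pmf m (1/2::real)"
  have bd: "binomial_distribution (1/2)" by unfold_locales auto
  have "real (\<Sum>j\<in>?J. m choose j) = (\<Sum>j\<in>?J. 2 ^ m * pmf ?B j)"
    unfolding of_nat_sum
  proof (rule sum.cong[OF refl])
    fix j assume j: "j \<in> ?J"
    hence "j \<le> m" by auto
    have "(1/2::real) ^ j * (1 - 1/2) ^ (m - j) = (1/2) ^ m"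
      using \<open>j \<le> m\<close> by (simp add: power_add[symmetric])
    thus "real (m choose j) = 2 ^ m * pmf ?B j"
      by (simp add: power_one_over)
  qed
  also have "\<dots> = 2 ^ m * measure_pmf.prob ?B ?J"
    by (simp add: measure_measure_pmf_finite sum_distrib_left)
  also have "\<dots> \<le> 2 ^ m * measure_pmf.prob ?B {x. e \<le> \<bar>real x - real m * (1/2)\<bar>}"
    by (intro mult_left_mono measure_pmf.finite_measure_mono) auto
  also have "\<dots> \<le> 2 ^ m * (2 * exp (- 2 * e\<^sup>2 / real m))"
    by (intro mult_left_mono binomial_distribution.prob_abs_ge[OF bd]) (use assms in auto)
  finally show ?thesis .
qed

lemma card_unbalanced_boolean_functions_le:
  fixes Z :: "'b set" and e :: real
  assumes "finite Z" "Z \<noteq> {}" "e \<ge> 0"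
  shows "real (card {F \<in> Z \<rightarrow>\<^sub>E (UNIV::bool set). e * card Z \<le> \<bar>real (card {z\<in>Z. F z}) - card Z / 2\<bar>})
         \<le> 2 ^ card Z * (2 * exp (- 2 * e\<^sup>2 * card Z))"
proof -
  let ?m = "card Z"
  let ?T = "{F \<in> Z \<rightarrow>\<^sub>E (UNIV::bool set). e * card Z \<le> \<bar>real (card {z\<in>Z. F z}) - card Z / 2\<bar>}"
  let ?J = "{j\<in>{..?m}. e * ?m \<le> \<bar>real j - real ?m / 2\<bar>}"
  let ?P = "\<Union>j\<in>?J. {B. B \<subseteq> Z \<and> card B = j}"
  have m: "?m > 0" using assms by (simp add: card_gt_0_iff)
  have inj: "inj_on (\<lambda>F. {z\<in>Z. F z}) ?T"
  proof (rule inj_onI)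
    fix F G assume F: "F \<in> ?T" and G: "G \<in> ?T" and eq: "{z\<in>Z. F z} = {z\<in>Z. G z}"
    show "F = G"
    proof (rule extensionalityI[of _ Z])
      show "F \<in> extensional Z" "G \<in> extensional Z" using F G by (auto simp: PiE_def)
      fix x assume "x \<in> Z" thus "F x = G x" using eq by blast
    qed
  qed
  have sub: "(\<lambda>F. {z\<in>Z. F z}) ` ?T \<subseteq> ?P"
  proof
    fix B assume "B \<in> (\<lambda>F. {z\<in>Z. F z}) ` ?T"
    then obtain F where F: "F \<in> ?T" and B: "B = {z\<in>Z. F z}" by blast
    have "card B \<le> ?m" using B assms(1) by (auto intro: card_mono)
    thus "B \<in> ?P" using F B by auto
  qed
  have finP: "finite ?P" using assms(1) by auto
  have "card ?T \<le> card ?P"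
    using card_inj_on_le[OF inj sub finP] .
  also have "card ?P = (\<Sum>j\<in>?J. card {B. B \<subseteq> Z \<and> card B = j})"
    by (rule card_UN_disjoint) (use assms(1) in auto)
  also have "\<dots> = (\<Sum>j\<in>?J. ?m choose j)"
    using n_subsets[OF assms(1)] by simp
  finally have "real (card ?T) \<le> real (\<Sum>j\<in>?J. ?m choose j)" by linarith
  also have "\<dots> \<le> 2 ^ ?m * (2 * exp (- 2 * (e * ?m)\<^sup>2 / real ?m))"
    by (rule sum_binomial_far_from_mean_le) (use m assms in auto)
  also have "- 2 * (e * ?m)\<^sup>2 / real ?m = - 2 * e\<^sup>2 * ?m"
    using m by (simp add: power2_eq_square field_simps)
  finally show ?thesis .
qed

section \<open>Recovering a function from parities\<close>

definition parities_determine :: "'a set set \<Rightarrow> 'a set \<Rightarrow> 'a set \<Rightarrow> bool" where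
  "parities_determine \<B> D Z \<longleftrightarrow>
     (\<forall>F G. (\<forall>z\<in>D. F z = G z) \<longrightarrow> (\<forall>B\<in>\<B>. odd (card {x \<in> B. F x}) = odd (card {x \<in> B. G x}))
       \<longrightarrow> (\<forall>z\<in>Z. F z = G z))"

lemma odd_card_filter_remove:
  assumes "finite B" "z \<in> B"
  shows "odd (card {x \<in> B. F x}) \<longleftrightarrow> odd (card {x \<in> B - {z}. F x}) \<noteq> F z"
proof -
  have "{x \<in> B. F x} = (if F z then insert z {x \<in> B - {z}. F x} else {x \<in> B - {z}. F x})"
    using assms(2) by auto
  thus ?thesis using assms(1) by simp
qed

text \<open>Order the points of Z and discard every point that is the largest point of some box.
  The values on the remaining points, together with all box parities, determine a function
  by induction along the order: each discarded point is the only unknown in the parity of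
  the box it tops.\<close>
lemma obtain_parity_determining_subset:
  fixes Z :: "'a set" and \<B> :: "'a set set"
  assumes "finite Z" "\<forall>B\<in>\<B>. B \<subseteq> Z \<and> B \<noteq> {}"
  obtains D where "D \<subseteq> Z" "\<forall>B\<in>\<B>. \<not> B \<subseteq> D" "parities_determine \<B> D Z"
proof -
  obtain idx :: "'a \<Rightarrow> nat" where idx: "inj_on idx Z"
    using finite_imp_inj_to_nat_seg[OF assms(1)] by blast
  define tops where "tops B z \<longleftrightarrow> z \<in> B \<and> (\<forall>y\<in>B - {z}. idx y < idx z)" for B z
  define D where "D = {z \<in> Z. \<not> (\<exists>B\<in>\<B>. tops B z)}"
  have "\<forall>B\<in>\<B>. \<not> B \<subseteq> D"
  proof (intro ballI notI)
    fix B assume B: "B \<in> \<B>" "B \<subseteq> D"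
    have fin: "finite B" using B(1) assms finite_subset by blast
    have "B \<subseteq> Z" "B \<noteq> {}" using B(1) assms(2) by auto
    have "Max (idx ` B) \<in> idx ` B" using fin \<open>B \<noteq> {}\<close> by (intro Max_in) auto
    then obtain z where z: "z \<in> B" "Max (idx ` B) = idx z" by blast
    have "idx y < idx z" if "y \<in> B - {z}" for y
    proof -
      have "idx y \<le> idx z" using Max_ge[of "idx ` B" "idx y"] that z(2) fin by simp
      moreover have "idx y \<noteq> idx z"
        using that z(1) \<open>B \<subseteq> Z\<close> inj_onD[OF idx, of y z] by blast
      ultimately show ?thesis by simp
    qed
    hence "tops B z" using z(1) by (simp add: tops_def)
    thus False using B z(1) by (auto simp: D_def)
  qed
  moreover have "F z = G z"
    if on_D: "\<forall>z\<in>D. F z = G z"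
      and parity: "\<forall>B\<in>\<B>. odd (card {x \<in> B. F x}) = odd (card {x \<in> B. G x})"
      and "z \<in> Z" for F G z
    using \<open>z \<in> Z\<close>
  proof (induction z rule: measure_induct_rule[of idx])
    case (less z)
    show ?case
    proof (cases "z \<in> D")
      case False
      then obtain B where B: "B \<in> \<B>" "tops B z" using less.prems by (auto simp: D_def)
      have fin: "finite B" using B(1) assms finite_subset by blast
      have "\<forall>y\<in>B - {z}. F y = G y"
        using B assms(2) less.IH by (auto simp: tops_def)
      hence "{x \<in> B - {z}. F x} = {x \<in> B - {z}. G x}" by auto
      moreover have "z \<in> B" using B(2) by (simp add: tops_def)
      ultimately show ?thesis
        using parity B(1) odd_card_filter_remove[OF fin, of z F] odd_card_filter_remove[OF fin, of z G]
        by metis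
    qed (use on_D in auto)
  qed
  ultimately show ?thesis using that[of D] by (auto simp: D_def parities_determine_def)
qed

section \<open>Full boxes in a fibre\<close>

definition full_boxes :: "nat \<Rightarrow> (nat \<Rightarrow> 'a set) \<Rightarrow> nat set \<Rightarrow> (nat \<Rightarrow> 'a) set \<Rightarrow> (nat \<Rightarrow> 'a) set set" where
  "full_boxes d Xs S Z = {hatx d Xs S xb | xb. xb \<in> Xbar d Xs S \<and> hatx d Xs S xb \<subseteq> Z
                                             \<and> card (hatx d Xs S xb) = 2 ^ card S}"

lemma parity_eq_if_dF_eq:
  assumes "dF d Xs S Z F = dF d Xs S Z G" "B \<in> full_boxes d Xs S Z"
  shows "odd (card {x \<in> B. F x}) = odd (card {x \<in> B. G x})"
proof -
  obtain xb where "B = hatx d Xs S xb" "xb \<in> Xbar d Xs S" "hatx d Xs S xb \<subseteq> Z"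
    "card (hatx d Xs S xb) = 2 ^ card S"
    using assms(2) by (auto simp: full_boxes_def)
  with fun_cong[OF assms(1), of xb] show ?thesis by (simp add: dF_def)
qed

lemma two_pow_card_le_card_GS_mult:
  assumes "finite Z" "D \<subseteq> Z" "parities_determine (full_boxes d Xs S Z) D Z"
  shows "2 ^ card Z \<le> card (GS d Xs S Z) * 2 ^ card D"
proof -
  let ?Fs = "Z \<rightarrow>\<^sub>E (UNIV :: bool set)"
  have "inj_on (\<lambda>F. (dF d Xs S Z F, restrict F D)) ?Fs"
  proof (rule inj_onI)
    fix F G assume F: "F \<in> ?Fs" and G: "G \<in> ?Fs"
      and eq: "(dF d Xs S Z F, restrict F D) = (dF d Xs S Z G, restrict G D)"
    have "\<forall>z\<in>Z. F z = G z"
    proof (rule assms(3)[unfolded parities_determine_def, THEN spec, THEN spec, THEN mp, THEN mp])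
      show "\<forall>z\<in>D. F z = G z" using eq by (metis prod.inject restrict_apply')
      show "\<forall>B\<in>full_boxes d Xs S Z. odd (card {x \<in> B. F x}) = odd (card {x \<in> B. G x})"
        using eq by (intro ballI parity_eq_if_dF_eq) simp_all
    qed
    then show "F = G" using F G by (intro extensionalityI[of _ Z]) (auto simp: PiE_def)
  qed
  moreover have "(\<lambda>F. (dF d Xs S Z F, restrict F D)) ` ?Fs \<subseteq> GS d Xs S Z \<times> (D \<rightarrow>\<^sub>E UNIV)"
    by (auto simp: GS_def)
  moreover have "finite (GS d Xs S Z \<times> (D \<rightarrow>\<^sub>E (UNIV :: bool set)))"
    using assms(1) finite_subset[OF assms(2,1)] by (simp add: GS_def finite_PiE)
  ultimately have "card ?Fs \<le> card (GS d Xs S Z \<times> (D \<rightarrow>\<^sub>E (UNIV :: bool set)))"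
    by (rule card_inj_on_le)
  thus ?thesis using assms(1,2) finite_subset[OF assms(2,1)] by (simp add: card_PiE card_cartesian_product)
qed

lemma hatx_eq_PiE:
  assumes "U \<in> Xprod d Xs" "V \<in> Xprod d Xs"
  shows "hatx d Xs S (U, V) = PiE {1..d} (\<lambda>i. if i \<in> S then {U i, V i} else {U i})"
proof
  show "hatx d Xs S (U, V) \<subseteq> PiE {1..d} (\<lambda>i. if i \<in> S then {U i, V i} else {U i})"
    by (auto simp: hatx_def Xprod_def PiE_def Pi_def)
  show "PiE {1..d} (\<lambda>i. if i \<in> S then {U i, V i} else {U i}) \<subseteq> hatx d Xs S (U, V)"
  proof
    fix y assume y: "y \<in> PiE {1..d} (\<lambda>i. if i \<in> S then {U i, V i} else {U i})"
    have "y i \<in> Xs i \<and> (i \<in> S \<longrightarrow> y i = U i \<or> y i = V i) \<and> (i \<notin> S \<longrightarrow> y i = U i)"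
      if "i \<in> {1..d}" for i
      using PiE_mem[OF y that] assms that by (auto simp: Xprod_def split: if_splits)
    moreover have "y i = U i" if "i \<notin> {1..d}" for i
      using y assms that by (auto simp: Xprod_def PiE_def extensional_def)
    ultimately show "y \<in> hatx d Xs S (U, V)"
      using y by (auto simp: hatx_def Xprod_def PiE_iff)
  qed
qed

lemma card_hatx:
  assumes "U \<in> Xprod d Xs" "V \<in> Xprod d Xs" "S \<subseteq> {1..d}" "\<forall>i\<in>S. U i \<noteq> V i"
  shows "card (hatx d Xs S (U, V)) = 2 ^ card S"
proof -
  have "card (hatx d Xs S (U, V)) = (\<Prod>i\<in>{1..d}. if i \<in> S then 2 else 1)"
    unfolding hatx_eq_PiE[OF assms(1,2)] card_PiE[OF finite_atLeastAtMost]
    using assms(4) by (intro prod.cong) auto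
  also have "\<dots> = 2 ^ card S"
    using assms(3) by (simp add: prod.If_cases Int_absorb1)
  finally show ?thesis .
qed

lemma Xprod_eqI:
  assumes "y \<in> Xprod d Xs" "z \<in> Xprod d Xs" "proj S y = proj S z" "\<forall>i\<in>{1..d} - S. y i = z i"
  shows "y = z"
proof (rule extensionalityI[of _ "{1..d}"])
  show "y \<in> extensional {1..d}" "z \<in> extensional {1..d}"
    using assms(1,2) by (auto simp: Xprod_def PiE_def)
  show "y i = z i" if "i \<in> {1..d}" for i
  proof (cases "i \<in> S")
    case True
    then show ?thesis using fun_cong[OF assms(3), of i] by (simp add: proj_def)
  qed (use that assms(4) in auto)
qed

lemma inj_on_proj_if_eq_off:
  assumes "Z \<subseteq> Xprod d Xs" "\<forall>z\<in>Z. \<forall>z'\<in>Z. \<forall>i\<in>{1..d} - S. z i = z' i"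
  shows "inj_on (proj S) Z"
proof (rule inj_onI)
  fix z z' assume z: "z \<in> Z" "z' \<in> Z" "proj S z = proj S z'"
  show "z = z'"
  proof (rule Xprod_eqI)
    show "z \<in> Xprod d Xs" "z' \<in> Xprod d Xs" using z assms(1) by auto
    show "\<forall>i\<in>{1..d} - S. z i = z' i" using z assms(2) by blast
  qed (rule z(3))
qed

text \<open>A box in the projection lifts, through the common values off S, to a full box inside D.\<close>
lemma box_free_proj_if_no_full_box:
  assumes "S \<subseteq> {1..d}" "Z \<subseteq> Xprod d Xs" "\<forall>z\<in>Z. \<forall>z'\<in>Z. \<forall>i\<in>{1..d} - S. z i = z' i"
    and "D \<subseteq> Z" "\<forall>B\<in>full_boxes d Xs S Z. \<not> B \<subseteq> D"
  shows "box_free S (proj S ` D)"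
  unfolding box_free_def
proof (intro notI, elim exE conjE)
  fix u v assume uv: "\<forall>i\<in>S. u i \<noteq> v i" and box: "PiE S (\<lambda>i. {u i, v i}) \<subseteq> proj S ` D"
  have "restrict u S \<in> proj S ` D" "restrict v S \<in> proj S ` D"
    using box by (auto simp: PiE_iff)
  then obtain zu zv where z: "zu \<in> D" "proj S zu = restrict u S" "zv \<in> D" "proj S zv = restrict v S"
    by (metis imageE)
  have zX: "zu \<in> Xprod d Xs" "zv \<in> Xprod d Xs" using z assms(2,4) by auto
  define U where "U i = (if i \<in> S then u i else zu i)" for i
  define V where "V i = (if i \<in> S then v i else zu i)" for i
  have "u i = zu i" "v i = zv i" if "i \<in> S" for i
    using that fun_cong[OF z(2), of i] fun_cong[OF z(4), of i] by (simp_all add: proj_def)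
  hence "u i \<in> Xs i" "v i \<in> Xs i" "zu i \<in> Xs i" if "i \<in> S" for i
    using that zX assms(1) by (auto simp: Xprod_def PiE_iff)
  moreover have "zu i \<in> Xs i" if "i \<in> {1..d}" for i
    using that zX by (auto simp: Xprod_def PiE_iff)
  moreover have "zu i = undefined" if "i \<notin> {1..d}" for i
    using that zX by (auto simp: Xprod_def PiE_iff extensional_def)
  ultimately have UV: "U \<in> Xprod d Xs" "V \<in> Xprod d Xs"
    using assms(1) by (auto simp: U_def V_def Xprod_def PiE_iff extensional_def)
  have in_D: "hatx d Xs S (U, V) \<subseteq> D"
  proof
    fix y assume y: "y \<in> hatx d Xs S (U, V)"
    have "proj S y \<in> PiE S (\<lambda>i. {u i, v i})"
      using y by (auto simp: hatx_def proj_def U_def V_def)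
    then have "proj S y \<in> proj S ` D" using box by blast
    then obtain z where z': "z \<in> D" "proj S y = proj S z" by blast
    have "zu i = z i" if "i \<in> {1..d} - S" for i
      using assms(3,4) z(1) z'(1) that by blast
    hence "\<forall>i\<in>{1..d} - S. y i = z i" using y by (auto simp: hatx_def U_def)
    moreover have "y \<in> Xprod d Xs" "z \<in> Xprod d Xs" using y z'(1) assms(2,4) by (auto simp: hatx_def)
    ultimately show "y \<in> D" using Xprod_eqI z' by metis
  qed
  have "card (hatx d Xs S (U, V)) = 2 ^ card S"
    using card_hatx[OF UV assms(1)] uv by (simp add: U_def V_def)
  moreover have "(U, V) \<in> Xbar d Xs S"
    using UV by (simp add: Xbar_def U_def V_def)
  moreover have "hatx d Xs S (U, V) \<subseteq> Z" using in_D assms(4) by blast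
  ultimately have "hatx d Xs S (U, V) \<in> full_boxes d Xs S Z"
    unfolding full_boxes_def by blast
  thus False using assms(5) in_D by blast
qed

lemma proj_in_PiE: "z \<in> Xprod d Xs \<Longrightarrow> S \<subseteq> {1..d} \<Longrightarrow> proj S z \<in> PiE S Xs"
  by (auto simp: proj_def Xprod_def PiE_iff)

lemma eq_if_card_proj_image_eq_1:
  assumes "card (proj T ` Z) = 1" "z \<in> Z" "z' \<in> Z" "i \<in> T"
  shows "z i = z' i"
proof -
  obtain c where "proj T ` Z = {c}" using assms(1) card_1_singletonE by blast
  hence "proj T z = c" "proj T z' = c" using assms(2,3) by auto
  hence "restrict z T i = restrict z' T i" by (simp add: proj_def)
  thus ?thesis using assms(4) by simp
qed

lemma one_le_card_PiE_mult_powr: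
  assumes "finite S" "S \<noteq> {}" "\<forall>i\<in>S. n \<le> card (Xs i)" "1 \<le> n"
  shows "1 \<le> real (card (PiE S Xs)) * real n powr (- 1 / 2 ^ card S)"
proof (rule one_le_mult_powr_neg)
  obtain a where a: "a \<in> S" using assms(2) by blast
  have "n * 1 \<le> card (Xs a) * (\<Prod>i\<in>S - {a}. card (Xs i))"
    using assms(3,4) a by (intro mult_le_mono prod_ge_1) (auto intro: order_trans)
  also have "\<dots> = card (PiE S Xs)"
    using assms(1) a by (simp add: card_PiE prod.remove)
  finally show "real n \<le> real (card (PiE S Xs))" by simp
qed (use assms(4) in auto)

lemma two_pow_card_le_card_GS_mult_exp:
  assumes "S \<subseteq> {1..d}" "S \<noteq> {}" "finite Z" "Z \<subseteq> Xprod d Xs"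
    and "\<forall>z\<in>Z. \<forall>z'\<in>Z. \<forall>i\<in>{1..d} - S. z i = z' i"
    and "\<forall>i\<in>S. finite (Xs i) \<and> n \<le> card (Xs i)" "1 \<le> n"
  shows "2 ^ card Z \<le> real (card (GS d Xs S Z))
           * exp (4 * real (card (PiE S Xs)) * real n powr (- 1 / 2 ^ card S))"
proof -
  have "\<forall>B\<in>full_boxes d Xs S Z. B \<subseteq> Z \<and> B \<noteq> {}"
    by (force simp: full_boxes_def)
  then obtain D where D: "D \<subseteq> Z" "\<forall>B\<in>full_boxes d Xs S Z. \<not> B \<subseteq> D"
    "parities_determine (full_boxes d Xs S Z) D Z"
    using obtain_parity_determining_subset[OF assms(3)] by blast
  have "card D = card (proj S ` D)"
    using inj_on_proj_if_eq_off[OF assms(4,5)] D(1) by (auto intro: card_image[symmetric] inj_on_subset)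
  also have "real (card (proj S ` D)) \<le> 4 * real (card (PiE S Xs)) * real n powr (- 1 / 2 ^ card S)"
  proof (rule card_le_if_box_free)
    show "proj S ` D \<subseteq> PiE S Xs" using D(1) assms(1,4) by (auto intro!: proj_in_PiE)
    show "box_free S (proj S ` D)" by (rule box_free_proj_if_no_full_box[OF assms(1,4,5) D(1,2)])
  qed (use finite_subset[OF assms(1)] assms(2,6,7) in auto)
  finally have card_D: "real (card D) \<le> 4 * real (card (PiE S Xs)) * real n powr (- 1 / 2 ^ card S)" .
  have "(2 :: real) ^ card D \<le> exp 1 ^ card D"
    using exp_ge_add_one_self[of 1] by (intro power_mono) auto
  also have "\<dots> \<le> exp (4 * real (card (PiE S Xs)) * real n powr (- 1 / 2 ^ card S))"
    using card_D by (simp add: exp_of_nat_mult[symmetric])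
  finally have "(2 :: real) ^ card D \<le> \<dots>" .
  moreover have "2 ^ card Z \<le> real (card (GS d Xs S Z)) * 2 ^ card D"
    using of_nat_mono[OF two_pow_card_le_card_GS_mult[OF assms(3) D(1,3)], where 'a = real] by simp
  ultimately show ?thesis by (meson mult_left_mono of_nat_0_le_iff order_trans)
qed

section \<open>The counting bound\<close>

lemma card_GS_eps_le:
  assumes "finite Z" "Z \<noteq> {}" "0 \<le> \<epsilon>"
  shows "real (card (GS_eps d Xs S \<epsilon> Z)) \<le> 2 ^ card Z * (2 * exp (- 2 * \<epsilon>\<^sup>2 * card Z))"
proof -
  define Unb where "Unb = {F \<in> Z \<rightarrow>\<^sub>E (UNIV :: bool set).
    \<epsilon> * card Z \<le> \<bar>real (card {z \<in> Z. F z}) - card Z / 2\<bar>}"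
  have "GS_eps d Xs S \<epsilon> Z \<subseteq> dF d Xs S Z ` Unb"
    by (auto simp: GS_eps_def Unb_def algebra_simps)
  moreover have "finite Unb" using assms(1) by (simp add: Unb_def finite_PiE)
  ultimately have "card (GS_eps d Xs S \<epsilon> Z) \<le> card Unb"
    by (meson card_image_le card_mono finite_imageI order_trans)
  also have "real (card Unb) \<le> 2 ^ card Z * (2 * exp (- 2 * \<epsilon>\<^sup>2 * card Z))"
    unfolding Unb_def using assms by (rule card_unbalanced_boolean_functions_le)
  finally show ?thesis by simp
qed

lemma divide_le_exp_of_counting_bounds:
  fixes E G X K N \<delta> \<epsilon> :: real and m :: nat
  assumes "E \<le> 2 ^ m * (2 * exp (- 2 * \<epsilon>\<^sup>2 * m))" "2 ^ m \<le> G * exp (4 * X)" "0 \<le> G"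
    and "1 \<le> X" "\<delta> * N \<le> m" "5 \<le> K"
  shows "E / G \<le> exp (N * (- \<delta> * \<epsilon>\<^sup>2) + K * X)"
proof -
  have "0 < G * exp (4 * X)" using assms(2) zero_less_power[of "2 :: real" m] by linarith
  hence "0 < G" using assms(3) by (simp add: zero_less_mult_iff)
  hence "E / G \<le> exp (4 * X) * 2 * exp (- 2 * \<epsilon>\<^sup>2 * m)"
    using order_trans[OF assms(1) mult_right_mono[OF assms(2)]]
    by (simp add: divide_le_eq algebra_simps)
  also have "\<dots> \<le> exp (4 * X) * exp X * exp (N * (- \<delta> * \<epsilon>\<^sup>2))"
  proof (intro mult_mono)
    show "2 \<le> exp X" using exp_ge_add_one_self[of X] assms(4) by linarith
    have "\<epsilon>\<^sup>2 * (\<delta> * N) \<le> \<epsilon>\<^sup>2 * m" using assms(5) by (simp add: mult_left_mono)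
    moreover have "0 \<le> \<epsilon>\<^sup>2 * m" by simp
    ultimately have "\<epsilon>\<^sup>2 * (\<delta> * N) \<le> 2 * \<epsilon>\<^sup>2 * m" by linarith
    thus "exp (- 2 * \<epsilon>\<^sup>2 * m) \<le> exp (N * (- \<delta> * \<epsilon>\<^sup>2))" by (simp add: algebra_simps)
  qed auto
  also have "\<dots> = exp (N * (- \<delta> * \<epsilon>\<^sup>2) + 5 * X)" by (simp add: exp_add[symmetric])
  also have "\<dots> \<le> exp (N * (- \<delta> * \<epsilon>\<^sup>2) + K * X)"
    using assms(4,6) by (simp add: mult_right_mono)
  finally show ?thesis .
qed

theorem proposition4p3:
  fixes d n :: nat and Xs :: "nat \<Rightarrow> 'a set" and S :: "nat set"
    and Z :: "(nat \<Rightarrow> 'a) set" and \<delta> \<epsilon> :: real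
  assumes "\<forall>i\<in>{1..d}. finite (Xs i) \<and> Xs i \<noteq> {}"
    and "\<forall>i\<in>{1..d}. \<forall>j\<in>{1..d}. i \<noteq> j \<longrightarrow> Xs i \<inter> Xs j = {}"
    and "S \<subseteq> {1..d}" and "card S \<ge> 2"
    and "Z \<subseteq> Xprod d Xs"
    and "card (proj ({1..d} - S) ` Z) = 1"
    and "\<delta> > 0" and "real (card Z) \<ge> \<delta> * real (card (PiE S Xs))"
    and "n \<ge> 1" and "\<forall>i\<in>S. card (Xs i) \<ge> n"
    and "\<epsilon> > 0"
  shows "real (card (GS_eps d Xs S \<epsilon> Z)) / real (card (GS d Xs S Z))
         \<le> exp (real (card (PiE S Xs)) *
                (- \<delta> * \<epsilon>\<^sup>2 + 2 ^ (card S + 2) * real n powr (- 1 / 2 ^ card S)))"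
proof -
  define X where "X = real (card (PiE S Xs)) * real n powr (- 1 / 2 ^ card S)"
  have S: "finite S" "S \<noteq> {}" using assms(3,4) finite_subset by (auto simp: card_gt_0_iff)
  have "finite (Xprod d Xs)" using assms(1) by (auto simp: Xprod_def intro!: finite_PiE)
  hence Z: "finite Z" "Z \<noteq> {}" using assms(5,6) finite_subset by auto
  have "\<forall>z\<in>Z. \<forall>z'\<in>Z. \<forall>i\<in>{1..d} - S. z i = z' i"
    using eq_if_card_proj_image_eq_1[OF assms(6)] by blast
  moreover have "\<forall>i\<in>S. finite (Xs i) \<and> n \<le> card (Xs i)" using assms(1,3,10) by auto
  ultimately have "2 ^ card Z \<le> real (card (GS d Xs S Z)) * exp (4 * X)"
    using two_pow_card_le_card_GS_mult_exp[OF assms(3) S(2) Z(1) assms(5) _ _ assms(9)]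
    by (simp add: X_def mult.assoc)
  moreover have "1 \<le> X"
    unfolding X_def using S assms(10,9) by (rule one_le_card_PiE_mult_powr)
  moreover have "(5 :: real) \<le> 2 ^ (card S + 2)"
    using power_increasing[of 4 "card S + 2" "2 :: real"] assms(4) by simp
  ultimately have "real (card (GS_eps d Xs S \<epsilon> Z)) / real (card (GS d Xs S Z))
      \<le> exp (card (PiE S Xs) * (- \<delta> * \<epsilon>\<^sup>2) + 2 ^ (card S + 2) * X)"
    using assms(8,11)
    by (intro divide_le_exp_of_counting_bounds[where m = "card Z"] card_GS_eps_le[OF Z]) simp_all
  thus ?thesis by (simp add: X_def algebra_simps)
qed

end
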